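(* Let $(\mathcal{X},d)$ be a finite metric space, $\mu\in\mathcal{M}_+(\mathcal{X})$, $t>0$, $s\in(0,1]$, and let $\hat\mu_{t,s}$ be the Poisson-model estimator. Then for every $p\ge1$ and $C>0$, $$\mathbb{E}\big[\mathrm{KR}^p_{p,C}(\hat\mu_{t,s},\mu)\big]\le\frac{C^p}{2}\Big(2(1-s)\mathbb{M}(\mu)+\frac{s}{\sqrt t}\sum_{x\in\mathcal{X}}\sqrt{\mu(x)}\Big).$$
   Context: $\mathcal{M}_+(\mathcal{X})$ is the set of non-negative measures on the finite set $\mathcal{X}$, $\mathbb{M}(\mu)=\sum_x\mu(x)$. For $\mu,\nu\in\mathcal{M}_+(\mathcal{X})$, $\Pi_\le(\mu,\nu)$ is the set of $\pi\in\mathcal{M}_+(\mathcal{X}\times\mathcal{X})$ with $\sum_{x'}\pi(x,x')\le\mu(x)$ and $\sum_x\pi(x,x')\le\nu(x')$ for all $x,x'$, and the $(p,C)$-Kantorovich–Rubinstein distance is $\mathrm{KR}_{p,C}(\mu,\nu)=\big(\min_{\pi\in\Pi_\le(\mu,\nu)}\sum_{x,x'}d^p(x,x')\pi(x,x')+C^p(\frac{\mathbb{M}(\mu)+\mathbb{M}(\nu)}{2}-\mathbb{M}(\pi))\big)^{1/p}$. Poisson model: let $(P_x)_{x\in\mathcal{X}}$ be independent with $P_x\sim\mathrm{Poi}(t\mu(x))$ and, independently, $(B_x)_{x\in\mathcal{X}}$ independent with $B_x\sim\mathrm{Ber}(s)$; the estimator is $\hat\mu_{t,s}=\frac{1}{st}\sum_{x\in\mathcal{X}}B_xP_x\delta_x$.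 *)

theory Defs
  imports "HOL-Probability.Probability"
begin

text \<open>Finite metric space: a type of class metric_space and finite, distance dist.
  Non-negative measures on it are functions mu :: 'a => real with mu x >= 0.\<close>

definition mass :: "('b::finite \<Rightarrow> real) \<Rightarrow> real" where
  "mass \<mu> = (\<Sum>x\<in>UNIV. \<mu> x)"

definition subcouplings :: "('a::finite \<Rightarrow> real) \<Rightarrow> ('a \<Rightarrow> real) \<Rightarrow> ('a \<times> 'a \<Rightarrow> real) set" where
  "subcouplings \<mu> \<nu> = {\<pi>. (\<forall>z. 0 \<le> \<pi> z) \<and>
      (\<forall>x. (\<Sum>x'\<in>UNIV. \<pi> (x, x')) \<le> \<mu> x) \<and>
      (\<forall>x'. (\<Sum>x\<in>UNIV. \<pi> (x, x')) \<le> \<nu> x')}"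

definition KR_cost :: "real \<Rightarrow> real \<Rightarrow> ('a::{metric_space,finite} \<Rightarrow> real) \<Rightarrow> ('a \<Rightarrow> real)
    \<Rightarrow> ('a \<times> 'a \<Rightarrow> real) \<Rightarrow> real" where
  "KR_cost p C \<mu> \<nu> \<pi> =
     (\<Sum>(x, x')\<in>UNIV. dist x x' powr p * \<pi> (x, x'))
     + C powr p * ((mass \<mu> + mass \<nu>) / 2 - mass \<pi>)"

text \<open>(p,C)-Kantorovich--Rubinstein distance (the minimum is attained, so Inf = min).\<close>
definition KR :: "real \<Rightarrow> real \<Rightarrow> ('a::{metric_space,finite} \<Rightarrow> real) \<Rightarrow> ('a \<Rightarrow> real) \<Rightarrow> real" where
  "KR p C \<mu> \<nu> = (INF \<pi>\<in>subcouplings \<mu> \<nu>. KR_cost p C \<mu> \<nu> \<pi>) powr (1 / p)"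

definition poi :: "real \<Rightarrow> nat pmf" where
  "poi r = (if 0 < r then poisson_pmf r else return_pmf 0)"

definition poisson_model :: "real \<Rightarrow> real \<Rightarrow> ('a::finite \<Rightarrow> real) \<Rightarrow> (('a \<Rightarrow> nat) \<times> ('a \<Rightarrow> bool)) pmf" where
  "poisson_model t s \<mu> =
     pair_pmf (Pi_pmf UNIV 0 (\<lambda>x. poi (t * \<mu> x))) (Pi_pmf UNIV False (\<lambda>x. bernoulli_pmf s))"

definition mu_hat :: "real \<Rightarrow> real \<Rightarrow> ('a \<Rightarrow> nat) \<times> ('a \<Rightarrow> bool) \<Rightarrow> 'a \<Rightarrow> real" where
  "mu_hat t s \<omega> x = (if snd \<omega> x then 1 else 0) * real (fst \<omega> x) / (s * t)"

end

theory Submission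
  imports Defs
begin

text \<open>Keeping the common mass \<open>min (\<nu> x) (\<mu> x)\<close> in place and creating or destroying the rest
  bounds \<open>KR\<^sup>p\<close> by \<open>C\<^sup>p/2\<close> times the \<open>\<ell>\<^sub>1\<close>-distance of \<open>\<nu>\<close> and \<open>\<mu>\<close>, so it suffices to bound the
  expected absolute error of the estimator at each point. With \<open>P ~ Poi(t\<mu>(x))\<close> and \<open>B ~ Ber(s)\<close>,
  conditioning on \<open>B\<close> and the triangle inequality give
  \<open>E \<bar>BP/(st) - \<mu>(x)\<bar> \<le> 2(1-s)\<mu>(x) + (s/t) E \<bar>P - t\<mu>(x)\<bar>\<close>, and the mean absolute deviation of a
  Poisson variable is at most its standard deviation \<open>\<surd>(t\<mu>(x))\<close>.\<close>

lemma nn_integral_pmf_nat_sums: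
  fixes p :: "nat pmf" and f :: "nat \<Rightarrow> real"
  assumes "\<And>n. 0 \<le> f n" and "(\<lambda>n. pmf p n * f n) sums S"
  shows "(\<integral>\<^sup>+n. ennreal (f n) \<partial>measure_pmf p) = ennreal S"
proof -
  have "0 \<le> S"
    by (rule sums_le[OF _ sums_zero assms(2)]) (simp add: assms(1))
  have "(\<integral>\<^sup>+n. ennreal (f n) \<partial>measure_pmf p) = (\<integral>\<^sup>+n. ennreal (pmf p n * f n) \<partial>count_space UNIV)"
    by (simp add: nn_integral_measure_pmf ennreal_mult assms(1))
  also have "\<dots> = (\<Sum>n. ennreal (pmf p n * f n))"
    by (rule nn_integral_count_space_nat)
  also have "\<dots> = ennreal S"
    using assms \<open>0 \<le> S\<close> by (intro sums_unique[symmetric]) (simp add: sums_ennreal)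
  finally show ?thesis .
qed

lemma poisson_moments_sums:
  fixes r :: real
  assumes r: "0 < r"
  defines "q \<equiv> pmf (poisson_pmf r)"
  shows poisson_total_sums: "q sums 1"
    and poisson_first_moment_sums: "(\<lambda>k. real k * q k) sums r"
    and poisson_second_moment_sums: "(\<lambda>k. (real k)\<^sup>2 * q k) sums (r * (r + 1))"
proof -
  have q: "q k = r ^ k / fact k * exp (- r)" for k
    by (simp add: q_def pmf_poisson[OF r])
  have "(\<lambda>k. r ^ k / fact k * exp (- r)) sums (exp r * exp (- r))"
    by (intro sums_mult2) (use exp_converges[of r] in \<open>simp add: divide_inverse mult.commute\<close>)
  then show total: "q sums 1"
    unfolding q by (simp add: exp_minus_inverse)
  have shift: "real (Suc k) * q (Suc k) = r * q k" for k
  proof -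
    have "real (Suc k) * q (Suc k) = (real (Suc k) / fact (Suc k)) * r * (r ^ k * exp (- r))"
      by (simp add: q)
    also have "real (Suc k) / fact (Suc k) = 1 / fact k"
      by (simp add: fact_Suc del: of_nat_Suc)
    finally show ?thesis
      by (simp add: q)
  qed
  have "(\<lambda>k. real (Suc k) * q (Suc k)) sums (r * 1)"
    unfolding shift by (rule sums_mult[OF total])
  then show first: "(\<lambda>k. real k * q k) sums r"
    using sums_Suc_iff[of "\<lambda>k. real k * q k"] by simp
  have "(real (Suc k))\<^sup>2 * q (Suc k) = r * (real k * q k) + r * q k" for k
  proof -
    have "(real (Suc k))\<^sup>2 * q (Suc k) = real (Suc k) * (real (Suc k) * q (Suc k))"
      by (simp add: power2_eq_square)
    then show ?thesis
      by (simp only: shift) (simp add: algebra_simps)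
  qed
  then have "(\<lambda>k. (real (Suc k))\<^sup>2 * q (Suc k)) sums (r * r + r * 1)"
    by (simp only:) (intro sums_add sums_mult first total)
  then show "(\<lambda>k. (real k)\<^sup>2 * q k) sums (r * (r + 1))"
    using sums_Suc_iff[of "\<lambda>k. (real k)\<^sup>2 * q k"] by (simp add: algebra_simps)
qed

lemma nn_integral_poi_count:
  assumes "0 \<le> r"
  shows "(\<integral>\<^sup>+n. ennreal (real n) \<partial>measure_pmf (poi r)) = ennreal r"
proof (cases "r = 0")
  case False
  with assms have "0 < r" by simp
  then show ?thesis
    by (intro nn_integral_pmf_nat_sums) (use poisson_first_moment_sums[of r] in \<open>simp_all add: poi_def mult.commute\<close>)
qed (simp add: poi_def)

lemma nn_integral_poi_sq_dev:
  assumes "0 \<le> r"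
  shows "(\<integral>\<^sup>+n. ennreal ((real n - r)\<^sup>2) \<partial>measure_pmf (poi r)) = ennreal r"
proof (cases "r = 0")
  case False
  with assms have r: "0 < r" by simp
  define q where "q = pmf (poisson_pmf r)"
  have "(\<lambda>k. (real k)\<^sup>2 * q k - 2 * r * (real k * q k) + r\<^sup>2 * q k) sums (r * (r + 1) - 2 * r * r + r\<^sup>2 * 1)"
    unfolding q_def
    by (intro sums_add sums_diff sums_mult poisson_moments_sums r)
  then have "(\<lambda>k. q k * (real k - r)\<^sup>2) sums r"
    by (simp add: algebra_simps power2_eq_square)
  then show ?thesis
    by (intro nn_integral_pmf_nat_sums) (use r in \<open>simp_all add: poi_def q_def\<close>)
qed (simp add: poi_def)

text \<open>Instead of Jensen's inequality we integrate the AM-GM bound \<open>\<bar>y\<bar> \<le> y\<^sup>2 / (2 \<surd>r) + \<surd>r / 2\<close>.\<close>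
lemma nn_integral_poi_abs_dev_le:
  assumes "0 \<le> r"
  shows "(\<integral>\<^sup>+n. ennreal \<bar>real n - r\<bar> \<partial>measure_pmf (poi r)) \<le> ennreal (sqrt r)"
proof (cases "r = 0")
  case False
  with assms have r: "0 < r" by simp
  have am_gm: "\<bar>y\<bar> \<le> 1 / (2 * sqrt r) * y\<^sup>2 + sqrt r / 2" for y
  proof -
    have "0 \<le> (\<bar>y\<bar> - sqrt r)\<^sup>2" by simp
    then have "2 * sqrt r * \<bar>y\<bar> \<le> y\<^sup>2 + r"
      using r by (simp add: power2_eq_square algebra_simps)
    then show ?thesis
      using r by (simp add: field_simps power2_eq_square)
  qed
  have "(\<integral>\<^sup>+n. ennreal \<bar>real n - r\<bar> \<partial>measure_pmf (poi r))
      \<le> (\<integral>\<^sup>+n. ennreal (1 / (2 * sqrt r)) * ennreal ((real n - r)\<^sup>2) + ennreal (sqrt r / 2) \<partial>measure_pmf (poi r))"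
    using am_gm r
    by (intro nn_integral_mono) (simp add: ennreal_mult''[symmetric] ennreal_plus[symmetric] del: ennreal_plus)
  also have "\<dots> = ennreal (1 / (2 * sqrt r)) * ennreal r + ennreal (sqrt r / 2)"
    using r by (simp add: nn_integral_add nn_integral_cmult nn_integral_poi_sq_dev measure_pmf.emeasure_space_1)
  also have "\<dots> = ennreal (1 / (2 * sqrt r) * r + sqrt r / 2)"
    using r by (simp add: ennreal_mult''[symmetric] ennreal_plus[symmetric] del: ennreal_plus)
  also have "1 / (2 * sqrt r) * r + sqrt r / 2 = sqrt r"
    using r by (simp add: field_simps)
  finally show ?thesis .
qed (simp add: poi_def)

lemma nn_integral_poi_affine_abs_dev_le:
  assumes "0 \<le> r" "0 \<le> a" "0 \<le> b" "0 \<le> c"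
  shows "(\<integral>\<^sup>+n. ennreal (a * real n + b * \<bar>real n - r\<bar> + c) \<partial>measure_pmf (poi r))
    \<le> ennreal (a * r + b * sqrt r + c)"
proof -
  have "(\<integral>\<^sup>+n. ennreal (a * real n + b * \<bar>real n - r\<bar> + c) \<partial>measure_pmf (poi r))
      = ennreal a * ennreal r + ennreal b * (\<integral>\<^sup>+n. ennreal \<bar>real n - r\<bar> \<partial>measure_pmf (poi r)) + ennreal c"
    using assms
    by (simp add: ennreal_mult nn_integral_add nn_integral_cmult nn_integral_poi_count
        measure_pmf.emeasure_space_1)
  also have "\<dots> \<le> ennreal a * ennreal r + ennreal b * ennreal (sqrt r) + ennreal c"
    by (intro add_mono mult_left_mono order.refl nn_integral_poi_abs_dev_le assms) simp
  also have "\<dots> = ennreal (a * r + b * sqrt r + c)"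
    using assms by (simp add: ennreal_mult)
  finally show ?thesis .
qed

lemma sum_UNIV_prod:
  "(\<Sum>z\<in>UNIV. g z) = (\<Sum>x\<in>(UNIV::'a::finite set). \<Sum>y\<in>(UNIV::'b::finite set). g (x, y))"
  by (simp add: sum.cartesian_product)

lemma mass_le_of_mem_subcouplings:
  assumes "\<pi> \<in> subcouplings \<mu> \<nu>"
  shows "mass \<pi> \<le> mass \<mu>" and "mass \<pi> \<le> mass \<nu>"
proof -
  from assms have row: "\<And>x. (\<Sum>x'\<in>UNIV. \<pi> (x, x')) \<le> \<mu> x"
    and col: "\<And>x'. (\<Sum>x\<in>UNIV. \<pi> (x, x')) \<le> \<nu> x'"
    by (auto simp: subcouplings_def)
  show "mass \<pi> \<le> mass \<mu>"
    unfolding mass_def sum_UNIV_prod by (intro sum_mono row)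
  show "mass \<pi> \<le> mass \<nu>"
    unfolding mass_def sum_UNIV_prod by (subst sum.swap) (intro sum_mono col)
qed

lemma KR_cost_nonneg:
  assumes "\<pi> \<in> subcouplings \<mu> \<nu>"
  shows "0 \<le> KR_cost p C \<mu> \<nu> \<pi>"
proof -
  have "0 \<le> (\<Sum>(x, x')\<in>UNIV. dist x x' powr p * \<pi> (x, x'))"
    using assms by (intro sum_nonneg) (auto simp: subcouplings_def)
  moreover have "0 \<le> (mass \<mu> + mass \<nu>) / 2 - mass \<pi>"
    using mass_le_of_mem_subcouplings[OF assms] by simp
  ultimately show ?thesis
    unfolding KR_cost_def by simp
qed

definition diag_subcoupling :: "('a \<Rightarrow> real) \<Rightarrow> ('a \<Rightarrow> real) \<Rightarrow> 'a \<times> 'a \<Rightarrow> real" where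
  "diag_subcoupling \<mu> \<nu> = (\<lambda>(x, x'). if x = x' then min (\<mu> x) (\<nu> x) else 0)"

lemma diag_subcoupling_mem_subcouplings:
  fixes \<mu> \<nu> :: "'a::finite \<Rightarrow> real"
  assumes "\<And>x. 0 \<le> \<mu> x" and "\<And>x. 0 \<le> \<nu> x"
  shows "diag_subcoupling \<mu> \<nu> \<in> subcouplings \<mu> \<nu>"
  using assms by (auto simp: subcouplings_def diag_subcoupling_def)

lemma KR_cost_diag_subcoupling:
  fixes \<mu> \<nu> :: "'a::{metric_space,finite} \<Rightarrow> real"
  shows "KR_cost p C \<mu> \<nu> (diag_subcoupling \<mu> \<nu>) = C powr p / 2 * (\<Sum>x\<in>UNIV. \<bar>\<mu> x - \<nu> x\<bar>)"
proof -
  have transport: "(\<Sum>(x, x')\<in>UNIV. dist x x' powr p * diag_subcoupling \<mu> \<nu> (x, x')) = 0"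
    by (rule sum.neutral) (auto simp: diag_subcoupling_def)
  have "mass (diag_subcoupling \<mu> \<nu>) = (\<Sum>x\<in>UNIV. min (\<mu> x) (\<nu> x))"
    unfolding mass_def sum_UNIV_prod by (simp add: diag_subcoupling_def)
  moreover have "(mass \<mu> + mass \<nu>) / 2 = (\<Sum>x\<in>UNIV. (\<mu> x + \<nu> x) / 2)"
    by (simp add: mass_def sum.distrib flip: sum_divide_distrib)
  ultimately have "(mass \<mu> + mass \<nu>) / 2 - mass (diag_subcoupling \<mu> \<nu>)
      = (\<Sum>x\<in>UNIV. (\<mu> x + \<nu> x) / 2 - min (\<mu> x) (\<nu> x))"
    by (simp add: sum_subtractf)
  also have "\<dots> = (\<Sum>x\<in>UNIV. \<bar>\<mu> x - \<nu> x\<bar>) / 2"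
    unfolding sum_divide_distrib by (intro sum.cong) (auto simp: min_def)
  finally show ?thesis
    unfolding KR_cost_def transport by simp
qed

lemma KR_powr_le_sum_abs_diff:
  fixes \<mu> \<nu> :: "'a::{metric_space,finite} \<Rightarrow> real"
  assumes "\<And>x. 0 \<le> \<mu> x" and "\<And>x. 0 \<le> \<nu> x" and "0 < p"
  shows "KR p C \<mu> \<nu> powr p \<le> C powr p / 2 * (\<Sum>x\<in>UNIV. \<bar>\<mu> x - \<nu> x\<bar>)"
proof -
  define I where "I = (INF \<pi>\<in>subcouplings \<mu> \<nu>. KR_cost p C \<mu> \<nu> \<pi>)"
  note diag = diag_subcoupling_mem_subcouplings[of \<mu> \<nu>, OF assms(1,2)]
  have "0 \<le> I"
    unfolding I_def using diag by (intro cINF_greatest KR_cost_nonneg) auto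
  then have "KR p C \<mu> \<nu> powr p = I"
    unfolding KR_def I_def[symmetric] powr_powr using assms(3) by simp
  also have "I \<le> KR_cost p C \<mu> \<nu> (diag_subcoupling \<mu> \<nu>)"
    unfolding I_def
    by (rule cINF_lower[OF _ diag]) (auto intro!: bdd_belowI2 KR_cost_nonneg)
  finally show ?thesis
    by (simp add: KR_cost_diag_subcoupling)
qed

lemma map_pmf_poisson_model_component:
  "map_pmf (\<lambda>\<omega>. (fst \<omega> x, snd \<omega> x)) (poisson_model t s \<mu>) = pair_pmf (poi (t * \<mu> x)) (bernoulli_pmf s)"
proof -
  let ?A = "Pi_pmf UNIV 0 (\<lambda>x. poi (t * \<mu> x))" and ?B = "Pi_pmf UNIV False (\<lambda>x. bernoulli_pmf s)"
  have "pair_pmf (poi (t * \<mu> x)) (bernoulli_pmf s) = pair_pmf (map_pmf (\<lambda>f. f x) ?A) (map_pmf (\<lambda>g. g x) ?B)"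
    by (simp add: Pi_pmf_component)
  also have "\<dots> = map_pmf (apsnd (\<lambda>g. g x)) (map_pmf (apfst (\<lambda>f. f x)) (pair_pmf ?A ?B))"
    by (simp only: pair_map_pmf1 pair_map_pmf2)
  also have "\<dots> = map_pmf (\<lambda>\<omega>. (fst \<omega> x, snd \<omega> x)) (poisson_model t s \<mu>)"
    by (simp add: poisson_model_def pmf.map_comp o_def apfst_def apsnd_def map_prod_def case_prod_unfold)
  finally show ?thesis ..
qed

lemma thinned_abs_dev_le:
  fixes y m s t :: real
  assumes "0 \<le> y" "0 < s" "s \<le> 1" "0 < t"
  shows "s * \<bar>y / (s * t) - m\<bar> \<le> (1 - s) / t * y + s / t * \<bar>y - t * m\<bar>"
proof -
  have split: "s * (y / (s * t) - m) = (y / t - s * (y / t)) + (s * (y / t) - s * m)"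
    using assms by (simp add: field_simps)
  have "s * \<bar>y / (s * t) - m\<bar> = \<bar>s * (y / (s * t) - m)\<bar>"
    using assms by (simp add: abs_mult)
  also have "\<dots> = \<bar>(y / t - s * (y / t)) + (s * (y / t) - s * m)\<bar>"
    by (simp only: split)
  also have "\<dots> \<le> \<bar>y / t - s * (y / t)\<bar> + \<bar>s * (y / t) - s * m\<bar>"
    by (rule abs_triangle_ineq)
  also have "y / t - s * (y / t) = (1 - s) / t * y"
    by (simp add: algebra_simps diff_divide_distrib)
  also have "\<bar>(1 - s) / t * y\<bar> = (1 - s) / t * y"
    using assms by simp
  also have "s * (y / t) - s * m = s / t * (y - t * m)"
    using assms by (simp add: field_simps)
  also have "\<bar>s / t * (y - t * m)\<bar> = s / t * \<bar>y - t * m\<bar>"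
    using assms by (simp add: abs_mult)
  finally show ?thesis .
qed

lemma nn_integral_bernoulli_thinned_abs_dev_le:
  fixes m s t :: real
  assumes "0 \<le> m" "0 < s" "s \<le> 1" "0 < t"
  shows "(\<integral>\<^sup>+b. ennreal \<bar>(if b then 1 else 0) * real n / (s * t) - m\<bar> \<partial>measure_pmf (bernoulli_pmf s))
    \<le> ennreal ((1 - s) / t * real n + s / t * \<bar>real n - t * m\<bar> + (1 - s) * m)"
proof -
  have "(\<integral>\<^sup>+b. ennreal \<bar>(if b then 1 else 0) * real n / (s * t) - m\<bar> \<partial>measure_pmf (bernoulli_pmf s))
      = ennreal (s * \<bar>real n / (s * t) - m\<bar> + (1 - s) * m)"
    using assms by (simp add: ennreal_mult[symmetric] ennreal_plus[symmetric] mult.commute del: ennreal_plus)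
  also have "\<dots> \<le> ennreal ((1 - s) / t * real n + s / t * \<bar>real n - t * m\<bar> + (1 - s) * m)"
    using thinned_abs_dev_le[of "real n" s t m] assms by (intro ennreal_leI) simp
  finally show ?thesis .
qed

lemma nn_integral_mu_hat_abs_dev_le:
  fixes \<mu> :: "'a::finite \<Rightarrow> real"
  assumes "0 \<le> \<mu> x" "0 < t" "0 < s" "s \<le> 1"
  shows "(\<integral>\<^sup>+\<omega>. ennreal \<bar>mu_hat t s \<omega> x - \<mu> x\<bar> \<partial>measure_pmf (poisson_model t s \<mu>))
    \<le> ennreal (2 * (1 - s) * \<mu> x + s / sqrt t * sqrt (\<mu> x))"
proof -
  let ?m = "\<mu> x"
  have "(\<integral>\<^sup>+\<omega>. ennreal \<bar>mu_hat t s \<omega> x - ?m\<bar> \<partial>measure_pmf (poisson_model t s \<mu>))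
      = (\<integral>\<^sup>+n. \<integral>\<^sup>+b. ennreal \<bar>(if b then 1 else 0) * real n / (s * t) - ?m\<bar>
          \<partial>measure_pmf (bernoulli_pmf s) \<partial>measure_pmf (poi (t * ?m)))"
    using arg_cong[OF map_pmf_poisson_model_component[of x t s \<mu>],
        of "\<lambda>M. \<integral>\<^sup>+z. ennreal \<bar>(if snd z then 1 else 0) * real (fst z) / (s * t) - ?m\<bar> \<partial>measure_pmf M"]
    by (simp add: nn_integral_pair_pmf' mu_hat_def)
  also have "\<dots> \<le> (\<integral>\<^sup>+n. ennreal ((1 - s) / t * real n + s / t * \<bar>real n - t * ?m\<bar> + (1 - s) * ?m)
      \<partial>measure_pmf (poi (t * ?m)))"
    using assms by (intro nn_integral_mono nn_integral_bernoulli_thinned_abs_dev_le)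
  also have "\<dots> \<le> ennreal ((1 - s) / t * (t * ?m) + s / t * sqrt (t * ?m) + (1 - s) * ?m)"
    using assms by (intro nn_integral_poi_affine_abs_dev_le) auto
  also have "(1 - s) / t * (t * ?m) + s / t * sqrt (t * ?m) + (1 - s) * ?m
      = 2 * (1 - s) * ?m + s / sqrt t * sqrt ?m"
  proof -
    have "sqrt t * sqrt t = t"
      using assms by simp
    then have "s / t * sqrt (t * ?m) = s / (sqrt t * sqrt t) * (sqrt t * sqrt ?m)"
      by (simp only: real_sqrt_mult)
    also have "\<dots> = s / sqrt t * sqrt ?m"
      using assms by (simp del: real_sqrt_mult_self)
    finally have "s / t * sqrt (t * ?m) = s / sqrt t * sqrt ?m" .
    then show ?thesis
      using assms by simp
  qed
  finally show ?thesis .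
qed

lemma nn_integral_sum_mu_hat_abs_dev_le:
  fixes \<mu> :: "'a::finite \<Rightarrow> real"
  assumes "\<And>x. 0 \<le> \<mu> x" "0 < t" "0 < s" "s \<le> 1"
  shows "(\<integral>\<^sup>+\<omega>. (\<Sum>x\<in>UNIV. ennreal \<bar>mu_hat t s \<omega> x - \<mu> x\<bar>) \<partial>measure_pmf (poisson_model t s \<mu>))
    \<le> ennreal (2 * (1 - s) * mass \<mu> + s / sqrt t * (\<Sum>x\<in>UNIV. sqrt (\<mu> x)))"
proof -
  have "(\<integral>\<^sup>+\<omega>. (\<Sum>x\<in>UNIV. ennreal \<bar>mu_hat t s \<omega> x - \<mu> x\<bar>) \<partial>measure_pmf (poisson_model t s \<mu>))
      = (\<Sum>x\<in>UNIV. \<integral>\<^sup>+\<omega>. ennreal \<bar>mu_hat t s \<omega> x - \<mu> x\<bar> \<partial>measure_pmf (poisson_model t s \<mu>))"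
    by (simp add: nn_integral_sum del: sum_ennreal)
  also have "\<dots> \<le> (\<Sum>x\<in>UNIV. ennreal (2 * (1 - s) * \<mu> x + s / sqrt t * sqrt (\<mu> x)))"
    using assms by (intro sum_mono nn_integral_mu_hat_abs_dev_le)
  also have "\<dots> = ennreal (\<Sum>x\<in>UNIV. 2 * (1 - s) * \<mu> x + s / sqrt t * sqrt (\<mu> x))"
    using assms by (intro sum_ennreal) auto
  also have "(\<Sum>x\<in>UNIV. 2 * (1 - s) * \<mu> x + s / sqrt t * sqrt (\<mu> x))
      = 2 * (1 - s) * mass \<mu> + s / sqrt t * (\<Sum>x\<in>UNIV. sqrt (\<mu> x))"
    by (simp add: mass_def sum.distrib sum_distrib_left)
  finally show ?thesis .
qed

theorem lemma2p4:
  fixes \<mu> :: "'a::{metric_space,finite} \<Rightarrow> real"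
    and t s p C :: real
  assumes "\<forall>x. 0 \<le> \<mu> x"
    and "0 < t" and "0 < s" and "s \<le> 1"
    and "1 \<le> p" and "0 < C"
  shows "(\<integral>\<^sup>+\<omega>. ennreal (KR p C (mu_hat t s \<omega>) \<mu> powr p) \<partial>measure_pmf (poisson_model t s \<mu>))
         \<le> ennreal (C powr p / 2 * (2 * (1 - s) * mass \<mu> + s / sqrt t * (\<Sum>x\<in>UNIV. sqrt (\<mu> x))))"
proof -
  let ?M = "measure_pmf (poisson_model t s \<mu>)"
  have "ennreal (KR p C (mu_hat t s \<omega>) \<mu> powr p)
      \<le> ennreal (C powr p / 2) * (\<Sum>x\<in>UNIV. ennreal \<bar>mu_hat t s \<omega> x - \<mu> x\<bar>)" for \<omega>
  proof -
    have "KR p C (mu_hat t s \<omega>) \<mu> powr p \<le> C powr p / 2 * (\<Sum>x\<in>UNIV. \<bar>mu_hat t s \<omega> x - \<mu> x\<bar>)"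
      using assms by (intro KR_powr_le_sum_abs_diff) (auto simp: mu_hat_def)
    then show ?thesis
      by (simp add: ennreal_mult[symmetric] sum_nonneg ennreal_leI)
  qed
  then have "(\<integral>\<^sup>+\<omega>. ennreal (KR p C (mu_hat t s \<omega>) \<mu> powr p) \<partial>?M)
      \<le> ennreal (C powr p / 2) * (\<integral>\<^sup>+\<omega>. (\<Sum>x\<in>UNIV. ennreal \<bar>mu_hat t s \<omega> x - \<mu> x\<bar>) \<partial>?M)"
    by (simp add: nn_integral_mono flip: nn_integral_cmult)
  also have "\<dots> \<le> ennreal (C powr p / 2) * ennreal (2 * (1 - s) * mass \<mu> + s / sqrt t * (\<Sum>x\<in>UNIV. sqrt (\<mu> x)))"
    using assms by (intro mult_left_mono nn_integral_sum_mu_hat_abs_dev_le) auto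
  also have "\<dots> = ennreal (C powr p / 2 * (2 * (1 - s) * mass \<mu> + s / sqrt t * (\<Sum>x\<in>UNIV. sqrt (\<mu> x))))"
    using assms by (intro ennreal_mult[symmetric] add_nonneg_nonneg mult_nonneg_nonneg sum_nonneg) (auto simp: mass_def intro: sum_nonneg)
  finally show ?thesis .
qed

end
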